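(* Let $\beta\in(1,3/2)$ and let $\mu$ be an arbitrary Borel probability measure on $S_\beta$. Then $$(m_1\otimes m_2\otimes\mu)\circ K_\beta^{-1}=(m_1\otimes m_2\otimes\mu)\circ R_\beta^{-1}=m_1\otimes m_2\otimes\nu,$$ where $\nu=ps\,\mu\circ\tau_1^{-1}+pt\,\mu\circ\tau_2^{-1}+p(1-s-t)\,\mu\circ\tau_3^{-1}+(1-p)s\,\mu\circ\tau_4^{-1}+(1-p)t\,\mu\circ\tau_5^{-1}+(1-p)(1-s-t)\,\mu\circ\tau_6^{-1}$.
   Context: $\vec q_0=(0,0)$, $\vec q_1=(1,0)$, $\vec q_2=(0,1)$; $S_\beta$ is the attractor of the IFS $f_{\vec q_i}(\vec z)=(\vec z+\vec q_i)/\beta$, here the closed triangle with vertices $(0,0)$, $(\frac1{\beta-1},0)$, $(0,\frac1{\beta-1})$. Subsets of $S_\beta$: $E_0=[0,\frac1\beta)\times[0,\frac1\beta)$; $E_1=\{0\le y<\frac1\beta,\ \frac{1}{\beta(\beta-1)}<x+y\le\frac{1}{\beta-1}\}$; $E_2=\{0\le x<\frac1\beta,\ \frac{1}{\beta(\beta-1)}<x+y\le\frac{1}{\beta-1}\}$; $C_{01}=\{x\ge\frac1\beta,\ 0\le y<\frac1\beta,\ x+y\le\frac{1}{\beta(\beta-1)}\}$; $C_{12}=\{x\ge\frac1\beta,\ y\ge\frac1\beta,\ \frac{1}{\beta(\beta-1)}<x+y\le\frac{1}{\beta-1}\}$; $C_{02}=\{0\le x<\frac1\beta,\ y\ge\frac1\beta,\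 x+y\le\frac{1}{\beta(\beta-1)}\}$; $C_{012}=\{x\ge\frac1\beta,\ y\ge\frac1\beta,\ x+y\le\frac{1}{\beta(\beta-1)}\}$. Maps $\tau_k(\vec z)=\beta\vec z-a_k(\vec z)$, $k=1,\ldots,6$: $a_k=\vec q_i$ on $E_i$; on $C_{ij}$ ($ij\in\{01,12,02\}$) $a_k=\vec q_i$ for $k\le3$ and $\vec q_j$ for $k\ge4$; on $C_{012}$, $a_k=\vec q_0$ for $k\in\{1,4\}$, $\vec q_1$ for $k\in\{2,5\}$, $\vec q_2$ for $k\in\{3,6\}$. For a measure $\mu$, $\mu\circ\tau_k^{-1}$ denotes $A\mapsto\mu(\tau_k^{-1}(A))$. $\Omega=\{0,1\}^{\mathbb N}$, $\Upsilon=\{0,1,2\}^{\mathbb N}$ with product $\sigma$-algebras and left shifts $\sigma,\sigma'$. Fix $p\in(0,1)$, $s,t>0$, $s+t<1$; $m_1$ is the product measure on $\Omega$ with weights $p$ (symbol $0$) and $1-p$ (symbol $1$); $m_2$ is the product measure on $\Upsilon$ with weights $s,t,1-s-t$ on symbols $0,1,2$. $K_\beta$ on $\Omega\times\Upsilon\times S_\beta$: $K_\beta(\omega,\upsilon,\vec z)=(\omega,\upsilon,\beta\vec z-\vec q_i)$ if $\vec z\in E_i$; $(\sigma\omega,\upsilon,\beta\vec z-\vec q_i)$ if $\omega_1=0$, $\vec z\in C_{ij}$; $(\sigma\omega,\upsilon,\beta\vec z-\vec q_j)$ if $\omega_1=1$, $\vec z\in C_{ij}$; $(\omega,\sigma'\upsilon,\beta\vec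 z-\vec q_i)$ if $\vec z\in C_{012}$, $\upsilon_1=i$. $R_\beta$ on $\Omega\times\Upsilon\times S_\beta$: $R_\beta(\omega,\upsilon,\vec z)=(\sigma\omega,\sigma'\upsilon,\tau_k(\vec z))$ with $k=3\omega_1+\upsilon_1+1$ (i.e. $(\omega_1,\upsilon_1)=(0,0),(0,1),(0,2),(1,0),(1,1),(1,2)$ give $k=1,\ldots,6$). *)

theory Defs
  imports "HOL-Probability.Probability"
begin

definition qv :: "nat \<Rightarrow> real \<times> real" where
  "qv i = (if i = 0 then (0, 0) else if i = 1 then (1, 0) else (0, 1))"

definition Sb :: "real \<Rightarrow> (real \<times> real) set" where
  "Sb \<beta> = {(x, y). 0 \<le> x \<and> 0 \<le> y \<and> x + y \<le> 1 / (\<beta> - 1)}"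

definition E0 :: "real \<Rightarrow> (real \<times> real) set" where
  "E0 \<beta> = Sb \<beta> \<inter> {(x, y). 0 \<le> x \<and> x < 1/\<beta> \<and> 0 \<le> y \<and> y < 1/\<beta>}"

definition E1 :: "real \<Rightarrow> (real \<times> real) set" where
  "E1 \<beta> = Sb \<beta> \<inter> {(x, y). 0 \<le> y \<and> y < 1/\<beta> \<and>
      1/(\<beta>*(\<beta>-1)) < x + y \<and> x + y \<le> 1/(\<beta>-1)}"

definition E2 :: "real \<Rightarrow> (real \<times> real) set" where
  "E2 \<beta> = Sb \<beta> \<inter> {(x, y). 0 \<le> x \<and> x < 1/\<beta> \<and>
      1/(\<beta>*(\<beta>-1)) < x + y \<and> x + y \<le> 1/(\<beta>-1)}"

definition C01 :: "real \<Rightarrow> (real \<times> real) set" where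
  "C01 \<beta> = Sb \<beta> \<inter> {(x, y). x \<ge> 1/\<beta> \<and> 0 \<le> y \<and> y < 1/\<beta> \<and> x + y \<le> 1/(\<beta>*(\<beta>-1))}"

definition C12 :: "real \<Rightarrow> (real \<times> real) set" where
  "C12 \<beta> = Sb \<beta> \<inter> {(x, y). x \<ge> 1/\<beta> \<and> y \<ge> 1/\<beta> \<and>
      1/(\<beta>*(\<beta>-1)) < x + y \<and> x + y \<le> 1/(\<beta>-1)}"

definition C02 :: "real \<Rightarrow> (real \<times> real) set" where
  "C02 \<beta> = Sb \<beta> \<inter> {(x, y). 0 \<le> x \<and> x < 1/\<beta> \<and> y \<ge> 1/\<beta> \<and> x + y \<le> 1/(\<beta>*(\<beta>-1))}"

definition C012 :: "real \<Rightarrow> (real \<times> real) set" where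
  "C012 \<beta> = Sb \<beta> \<inter> {(x, y). x \<ge> 1/\<beta> \<and> y \<ge> 1/\<beta> \<and> x + y \<le> 1/(\<beta>*(\<beta>-1))}"

text \<open>Digit a_k(z); points outside S_beta get the (irrelevant) default q_0.\<close>
definition adig :: "real \<Rightarrow> nat \<Rightarrow> real \<times> real \<Rightarrow> real \<times> real" where
  "adig \<beta> k z =
    (if z \<in> E0 \<beta> then qv 0
     else if z \<in> E1 \<beta> then qv 1
     else if z \<in> E2 \<beta> then qv 2
     else if z \<in> C01 \<beta> then (if k \<le> 3 then qv 0 else qv 1)
     else if z \<in> C12 \<beta> then (if k \<le> 3 then qv 1 else qv 2)
     else if z \<in> C02 \<beta> then (if k \<le> 3 then qv 0 else qv 2)
     else if z \<in> C012 \<beta> then qv ((k - 1) mod 3)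
     else qv 0)"

definition tau :: "real \<Rightarrow> nat \<Rightarrow> real \<times> real \<Rightarrow> real \<times> real" where
  "tau \<beta> k z = \<beta> *\<^sub>R z - adig \<beta> k z"

definition shift :: "(nat \<Rightarrow> nat) \<Rightarrow> nat \<Rightarrow> nat" where
  "shift w = (\<lambda>n. w (Suc n))"

definition m1 :: "real \<Rightarrow> (nat \<Rightarrow> nat) measure" where
  "m1 p = (\<Pi>\<^sub>M n\<in>(UNIV::nat set).
      density (count_space {0, 1::nat}) (\<lambda>i. ennreal (if i = 0 then p else 1 - p)))"

definition m2 :: "real \<Rightarrow> real \<Rightarrow> (nat \<Rightarrow> nat) measure" where
  "m2 s t = (\<Pi>\<^sub>M n\<in>(UNIV::nat set).
      density (count_space {0, 1, 2::nat})
        (\<lambda>i. ennreal (if i = 0 then s else if i = 1 then t else 1 - s - t)))"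

definition Kmap :: "real \<Rightarrow> (nat \<Rightarrow> nat) \<times> (nat \<Rightarrow> nat) \<times> (real \<times> real)
      \<Rightarrow> (nat \<Rightarrow> nat) \<times> (nat \<Rightarrow> nat) \<times> (real \<times> real)" where
  "Kmap \<beta> x = (case x of (\<omega>, \<upsilon>, z) \<Rightarrow>
     (if z \<in> E0 \<beta> then (\<omega>, \<upsilon>, \<beta> *\<^sub>R z - qv 0)
      else if z \<in> E1 \<beta> then (\<omega>, \<upsilon>, \<beta> *\<^sub>R z - qv 1)
      else if z \<in> E2 \<beta> then (\<omega>, \<upsilon>, \<beta> *\<^sub>R z - qv 2)
      else if z \<in> C01 \<beta> then (shift \<omega>, \<upsilon>, \<beta> *\<^sub>R z - (if \<omega> 0 = 0 then qv 0 else qv 1))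
      else if z \<in> C12 \<beta> then (shift \<omega>, \<upsilon>, \<beta> *\<^sub>R z - (if \<omega> 0 = 0 then qv 1 else qv 2))
      else if z \<in> C02 \<beta> then (shift \<omega>, \<upsilon>, \<beta> *\<^sub>R z - (if \<omega> 0 = 0 then qv 0 else qv 2))
      else if z \<in> C012 \<beta> then (\<omega>, shift \<upsilon>, \<beta> *\<^sub>R z - qv (\<upsilon> 0))
      else (\<omega>, \<upsilon>, z)))"

definition Rmap :: "real \<Rightarrow> (nat \<Rightarrow> nat) \<times> (nat \<Rightarrow> nat) \<times> (real \<times> real)
      \<Rightarrow> (nat \<Rightarrow> nat) \<times> (nat \<Rightarrow> nat) \<times> (real \<times> real)" where
  "Rmap \<beta> x = (case x of (\<omega>, \<upsilon>, z) \<Rightarrow>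
     (shift \<omega>, shift \<upsilon>, tau \<beta> (3 * \<omega> 0 + \<upsilon> 0 + 1) z))"

definition wt :: "real \<Rightarrow> real \<Rightarrow> real \<Rightarrow> nat \<Rightarrow> real" where
  "wt p s t k = (if k \<le> 3 then p else 1 - p) *
     (if (k - 1) mod 3 = 0 then s else if (k - 1) mod 3 = 1 then t else 1 - s - t)"

definition nu :: "real \<Rightarrow> real \<Rightarrow> real \<Rightarrow> real \<Rightarrow> (real \<times> real) measure \<Rightarrow> (real \<times> real) measure" where
  "nu \<beta> p s t \<mu> = measure_of (Sb \<beta>) (sets (restrict_space borel (Sb \<beta>)))
     (\<lambda>A. \<Sum>k\<in>{1..6}. ennreal (wt p s t k) *
        emeasure (distr \<mu> (restrict_space borel (Sb \<beta>)) (tau \<beta> k)) A)"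

end

theory Submission
  imports Defs
begin

text \<open>
  Over a point \<open>z\<close> of \<open>S\<^sub>\<beta>\<close> both skew products act on the fibre in the same way: they send
  \<open>z\<close> to \<open>\<tau>\<^sub>k z\<close> with \<open>k = 3 \<omega>\<^sub>1 + \<upsilon>\<^sub>1 + 1\<close> and shift away exactly the digits they consume.
  A digit that is not consumed has no influence on the image of \<open>z\<close> (on \<open>E\<^sub>i\<close> no digit is
  consumed by \<open>K\<^sub>\<beta>\<close>, on \<open>C\<^sub>i\<^sub>j\<close> only \<open>\<omega>\<^sub>1\<close>, on \<open>C\<^sub>0\<^sub>1\<^sub>2\<close> only \<open>\<upsilon>\<^sub>1\<close>), and under a
  Bernoulli measure a consumed digit is independent of the shifted sequence. So the fibre over
  \<open>z\<close> of a rectangle \<open>A \<times> B \<times> C\<close> has measure \<open>m\<^sub>1(A) m\<^sub>2(B) \<Sum>\<^sub>k w\<^sub>k 1\<^sub>C(\<tau>\<^sub>k z)\<close>;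
  integrating over \<open>\<mu>\<close> gives \<open>m\<^sub>1(A) m\<^sub>2(B) \<nu>(C)\<close>, and rectangles determine the product
  measure. Sequences are indexed from 0, so the paper's \<open>\<omega>\<^sub>1\<close> is \<open>\<omega> 0\<close> here.
\<close>

section \<open>Geometry of the triangle\<close>

lemma mem_Sb: "(x, y) \<in> Sb \<beta> \<longleftrightarrow> 0 \<le> x \<and> 0 \<le> y \<and> x + y \<le> 1 / (\<beta> - 1)"
  by (simp add: Sb_def)

lemma scale_sub_qv0_mem_Sb:
  assumes "1 < \<beta>" "0 \<le> x" "0 \<le> y" "x + y \<le> 1 / (\<beta> * (\<beta> - 1))"
  shows "\<beta> *\<^sub>R (x, y) - qv 0 \<in> Sb \<beta>"
proof -
  have "(\<beta> - 1) * (\<beta> * x + \<beta> * y) \<le> 1"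
    using assms(1,4) by (simp add: field_simps)
  with assms show ?thesis by (simp add: mem_Sb qv_def field_simps)
qed

lemma scale_sub_qv1_mem_Sb:
  assumes "1 < \<beta>" "(x, y) \<in> Sb \<beta>" "1 / \<beta> \<le> x"
  shows "\<beta> *\<^sub>R (x, y) - qv 1 \<in> Sb \<beta>"
proof -
  have "(\<beta> - 1) * (x + y) \<le> 1" "0 \<le> y" using assms(1,2) by (auto simp: mem_Sb field_simps)
  then have "(\<beta> - 1) * (\<beta> * x - 1 + \<beta> * y) \<le> 1"
    using assms(1) mult_left_mono[of "(\<beta> - 1) * (x + y)" 1 \<beta>] by (simp add: algebra_simps)
  with assms show ?thesis by (simp add: mem_Sb qv_def field_simps)
qed

lemma scale_sub_qv2_mem_Sb:
  assumes "1 < \<beta>" "(x, y) \<in> Sb \<beta>" "1 / \<beta> \<le> y"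
  shows "\<beta> *\<^sub>R (x, y) - qv 2 \<in> Sb \<beta>"
proof -
  have "(\<beta> - 1) * (x + y) \<le> 1" "0 \<le> x" using assms(1,2) by (auto simp: mem_Sb field_simps)
  then have "(\<beta> - 1) * (\<beta> * x + (\<beta> * y - 1)) \<le> 1"
    using assms(1) mult_left_mono[of "(\<beta> - 1) * (x + y)" 1 \<beta>] by (simp add: algebra_simps)
  with assms show ?thesis by (simp add: mem_Sb qv_def field_simps)
qed

lemma Sb_regions_cover:
  assumes "z \<in> Sb \<beta>"
  shows "z \<in> E0 \<beta> \<or> z \<in> E1 \<beta> \<or> z \<in> E2 \<beta> \<or> z \<in> C01 \<beta> \<or> z \<in> C12 \<beta> \<or> z \<in> C02 \<beta> \<or> z \<in> C012 \<beta>"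
proof -
  obtain x y where z: "z = (x, y)" by fastforce
  show ?thesis
    using assms unfolding z
    by (cases "x + y \<le> 1 / (\<beta> * (\<beta> - 1))"; cases "x < 1 / \<beta>"; cases "y < 1 / \<beta>")
      (simp_all add: E0_def E1_def E2_def C01_def C12_def C02_def C012_def mem_Sb not_le not_less)
qed

lemma tau_mem_Sb:
  assumes "1 < \<beta>" "\<beta> < 3/2" "z \<in> Sb \<beta>"
  shows "tau \<beta> k z \<in> Sb \<beta>"
proof -
  obtain x y where z: "z = (x, y)" by fastforce
  \<comment> \<open>The only use of \<open>\<beta> < 3/2\<close>: the digit chosen on \<open>E\<^sub>0\<close>, \<open>E\<^sub>1\<close>, \<open>E\<^sub>2\<close> is admissible.\<close>
  have "2 / \<beta> \<le> 1 / (\<beta> * (\<beta> - 1))"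
    using assms(1,2) by (simp add: field_simps)
  then have E0: "x + y \<le> 1 / (\<beta> * (\<beta> - 1))" if "z \<in> E0 \<beta>"
    using that by (auto simp: z E0_def add_divide_distrib[symmetric])
  have "1 / \<beta> \<le> 1 / (\<beta> * (\<beta> - 1)) - 1 / \<beta>"
    using assms(1,2) by (simp add: field_simps)
  then have E1: "1 / \<beta> \<le> x" if "z \<in> E1 \<beta>"
    using that by (auto simp: z E1_def)
  have E2: "1 / \<beta> \<le> y" if "z \<in> E2 \<beta>"
    using that \<open>1 / \<beta> \<le> _\<close> by (auto simp: z E2_def)
  have lower: "x + y \<le> 1 / (\<beta> * (\<beta> - 1))" if "z \<in> C01 \<beta> \<or> z \<in> C02 \<beta> \<or> z \<in> C012 \<beta>"
    using that by (auto simp: z C01_def C02_def C012_def)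
  have right: "1 / \<beta> \<le> x" if "z \<in> C01 \<beta> \<or> z \<in> C12 \<beta> \<or> z \<in> C012 \<beta>"
    using that by (auto simp: z C01_def C12_def C012_def)
  have up: "1 / \<beta> \<le> y" if "z \<in> C02 \<beta> \<or> z \<in> C12 \<beta> \<or> z \<in> C012 \<beta>"
    using that by (auto simp: z C02_def C12_def C012_def)
  have "qv ((k - 1) mod 3) \<in> {qv 0, qv 1, qv 2}"
    by (simp add: qv_def)
  then have "x + y \<le> 1 / (\<beta> * (\<beta> - 1)) \<and> adig \<beta> k z = qv 0 \<or> 1 / \<beta> \<le> x \<and> adig \<beta> k z = qv 1
      \<or> 1 / \<beta> \<le> y \<and> adig \<beta> k z = qv 2"
    using Sb_regions_cover[OF assms(3)] E0 E1 E2 lower right up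
    unfolding adig_def by (auto split: if_split)
  then show ?thesis
    using assms scale_sub_qv0_mem_Sb[of \<beta> x y] scale_sub_qv1_mem_Sb[of \<beta> x y]
      scale_sub_qv2_mem_Sb[of \<beta> x y]
    by (auto simp: z tau_def mem_Sb)
qed

lemma borel_Collect_case_prod:
  fixes P :: "real \<Rightarrow> real \<Rightarrow> bool"
  assumes "Measurable.pred (borel \<Otimes>\<^sub>M borel) (\<lambda>z. P (fst z) (snd z))"
  shows "{(x, y). P x y} \<in> sets borel"
proof -
  have "{(x, y). P x y} = {z \<in> space (borel \<Otimes>\<^sub>M borel). P (fst z) (snd z)}"
    by (auto simp: space_pair_measure)
  with assms show ?thesis
    by (simp add: pred_def borel_prod)
qed

lemma sets_borel_regions [measurable]:
  "Sb \<beta> \<in> sets borel" "E0 \<beta> \<in> sets borel" "E1 \<beta> \<in> sets borel" "E2 \<beta> \<in> sets borel"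
  "C01 \<beta> \<in> sets borel" "C12 \<beta> \<in> sets borel" "C02 \<beta> \<in> sets borel" "C012 \<beta> \<in> sets borel"
  unfolding Sb_def E0_def E1_def E2_def C01_def C12_def C02_def C012_def
  by (intro sets.Int borel_Collect_case_prod; measurable)+

lemma borel_measurable_tau [measurable]: "tau \<beta> k \<in> borel_measurable borel"
  unfolding tau_def adig_def by measurable

section \<open>Products of three measures\<close>

lemma triple_pair_measure_eqI:
  assumes "finite_measure M1" "finite_measure M2" "finite_measure M3"
    and sets_N: "sets N = sets (M1 \<Otimes>\<^sub>M (M2 \<Otimes>\<^sub>M M3))"
    and emeasure_N: "\<And>A B C. A \<in> sets M1 \<Longrightarrow> B \<in> sets M2 \<Longrightarrow> C \<in> sets M3 \<Longrightarrow>
      emeasure N (A \<times> B \<times> C) = emeasure M1 A * emeasure M2 B * emeasure M3 C"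
  shows "M1 \<Otimes>\<^sub>M (M2 \<Otimes>\<^sub>M M3) = N"
proof -
  interpret M2: finite_measure M2 by fact
  interpret M3: finite_measure M3 by fact
  interpret M23: finite_measure "M2 \<Otimes>\<^sub>M M3"
    by (rule finite_measure_pair_measure) fact+
  let ?\<Omega> = "space M1 \<times> space M2 \<times> space M3"
  let ?G = "{A \<times> B \<times> C | A B C. A \<in> sets M1 \<and> B \<in> sets M2 \<and> C \<in> sets M3}"
  let ?G23 = "{B \<times> C | B C. B \<in> sets M2 \<and> C \<in> sets M3}"
  have G_sub: "?G \<subseteq> Pow ?\<Omega>"
    by (auto dest!: sets.sets_into_space)
  have "sets (M1 \<Otimes>\<^sub>M (M2 \<Otimes>\<^sub>M M3)) = sets (sigma (space M1 \<times> space (M2 \<Otimes>\<^sub>M M3))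
      {A \<times> X | A X. A \<in> sets M1 \<and> X \<in> ?G23})"
  proof (rule sets_pair_eq[where Ca = "{space M1}" and Cb = "{space M2 \<times> space M3}"])
    show "?G23 \<subseteq> Pow (space (M2 \<Otimes>\<^sub>M M3))"
      by (auto simp: space_pair_measure dest!: sets.sets_into_space)
  qed (auto simp: sets_pair_measure space_pair_measure sets.sigma_sets_eq sets.space_closed)
  also have "{A \<times> X | A X. A \<in> sets M1 \<and> X \<in> ?G23} = ?G"
    by blast
  finally have sets_G: "sets (M1 \<Otimes>\<^sub>M (M2 \<Otimes>\<^sub>M M3)) = sigma_sets ?\<Omega> ?G"
    using G_sub by (simp add: space_pair_measure)
  show ?thesis
  proof (rule measure_eqI_generator_eq[where E = ?G and A = "\<lambda>_. ?\<Omega>"])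
    show "Int_stable ?G"
    proof (rule Int_stableI)
      fix X Y assume "X \<in> ?G" "Y \<in> ?G"
      then obtain A B C A' B' C' where "X = A \<times> B \<times> C" "Y = A' \<times> B' \<times> C'"
        and "A \<in> sets M1" "B \<in> sets M2" "C \<in> sets M3" "A' \<in> sets M1" "B' \<in> sets M2" "C' \<in> sets M3"
        by blast
      then show "X \<inter> Y \<in> ?G"
        by (intro CollectI exI[of _ "A \<inter> A'"] exI[of _ "B \<inter> B'"] exI[of _ "C \<inter> C'"]) auto
    qed
    show "range (\<lambda>_. ?\<Omega>) \<subseteq> ?G"
      by blast
    show "emeasure (M1 \<Otimes>\<^sub>M (M2 \<Otimes>\<^sub>M M3)) ?\<Omega> \<noteq> \<infinity>" for i :: nat
      using assms(1) M23.emeasure_finite[of "space (M2 \<Otimes>\<^sub>M M3)"]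
      by (simp add: M23.emeasure_pair_measure_Times space_pair_measure
          finite_measure.emeasure_finite ennreal_mult_eq_top_iff)
    fix X assume "X \<in> ?G"
    then obtain A B C where X: "X = A \<times> B \<times> C" and "A \<in> sets M1" "B \<in> sets M2" "C \<in> sets M3"
      by blast
    then show "emeasure (M1 \<Otimes>\<^sub>M (M2 \<Otimes>\<^sub>M M3)) X = emeasure N X"
      by (simp add: emeasure_N M23.emeasure_pair_measure_Times M3.emeasure_pair_measure_Times
          mult.assoc)
  qed (use G_sub sets_G sets_N in auto)
qed

lemma nn_integral_triple_swap:
  assumes "sigma_finite_measure M1" "sigma_finite_measure M2" "sigma_finite_measure M3"
    and f: "f \<in> borel_measurable (M1 \<Otimes>\<^sub>M (M2 \<Otimes>\<^sub>M M3))"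
  shows "integral\<^sup>N (M1 \<Otimes>\<^sub>M (M2 \<Otimes>\<^sub>M M3)) f = (\<integral>\<^sup>+z. \<integral>\<^sup>+x. \<integral>\<^sup>+y. f (x, y, z) \<partial>M2 \<partial>M1 \<partial>M3)"
proof -
  note [measurable] = f
  interpret M3: sigma_finite_measure M3 by fact
  interpret M23: pair_sigma_finite M2 M3
    by (intro pair_sigma_finite.intro) fact+
  interpret M13: pair_sigma_finite M1 M3
    by (intro pair_sigma_finite.intro) fact+
  have "integral\<^sup>N (M1 \<Otimes>\<^sub>M (M2 \<Otimes>\<^sub>M M3)) f = (\<integral>\<^sup>+x. \<integral>\<^sup>+w. f (x, w) \<partial>(M2 \<Otimes>\<^sub>M M3) \<partial>M1)"
    using sigma_finite_measure.nn_integral_fst[OF sigma_finite_pair_measure[OF assms(2,3)] f]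
    by simp
  also have "\<dots> = (\<integral>\<^sup>+x. \<integral>\<^sup>+z. \<integral>\<^sup>+y. f (x, y, z) \<partial>M2 \<partial>M3 \<partial>M1)"
  proof (rule nn_integral_cong)
    fix x assume "x \<in> space M1"
    then have [measurable]: "(\<lambda>w. f (x, w)) \<in> borel_measurable (M2 \<Otimes>\<^sub>M M3)"
      by measurable
    show "(\<integral>\<^sup>+w. f (x, w) \<partial>(M2 \<Otimes>\<^sub>M M3)) = (\<integral>\<^sup>+z. \<integral>\<^sup>+y. f (x, y, z) \<partial>M2 \<partial>M3)"
      by (simp add: M3.nn_integral_fst[symmetric] M23.Fubini')
  qed
  also have "\<dots> = (\<integral>\<^sup>+z. \<integral>\<^sup>+x. \<integral>\<^sup>+y. f (x, y, z) \<partial>M2 \<partial>M1 \<partial>M3)"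
    by (intro M13.Fubini'[symmetric]) measurable
  finally show ?thesis .
qed

lemma distr_eq_pair_measure_by_fibres:
  fixes \<kappa> :: "'c \<Rightarrow> 'c set \<Rightarrow> ennreal"
  assumes M1: "finite_measure M1" and M2: "finite_measure M2"
    and \<mu>: "finite_measure \<mu>" and \<nu>: "finite_measure \<nu>" and sets_\<nu>: "sets \<nu> = sets \<mu>"
    and \<Phi>: "\<Phi> \<in> measurable (M1 \<Otimes>\<^sub>M (M2 \<Otimes>\<^sub>M \<mu>)) (M1 \<Otimes>\<^sub>M (M2 \<Otimes>\<^sub>M \<mu>))"
    and \<kappa>: "\<And>C. C \<in> sets \<mu> \<Longrightarrow> (\<lambda>z. \<kappa> z C) \<in> borel_measurable \<mu>"
    and emeasure_\<nu>: "\<And>C. C \<in> sets \<mu> \<Longrightarrow> emeasure \<nu> C = (\<integral>\<^sup>+z. \<kappa> z C \<partial>\<mu>)"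
    and fibre: "\<And>z A B C. z \<in> space \<mu> \<Longrightarrow> A \<in> sets M1 \<Longrightarrow> B \<in> sets M2 \<Longrightarrow> C \<in> sets \<mu> \<Longrightarrow>
      (\<integral>\<^sup>+\<omega>. \<integral>\<^sup>+\<upsilon>. indicator (A \<times> B \<times> C) (\<Phi> (\<omega>, \<upsilon>, z)) \<partial>M2 \<partial>M1)
        = emeasure M1 A * emeasure M2 B * \<kappa> z C"
  shows "distr (M1 \<Otimes>\<^sub>M (M2 \<Otimes>\<^sub>M \<mu>)) (M1 \<Otimes>\<^sub>M (M2 \<Otimes>\<^sub>M \<mu>)) \<Phi> = M1 \<Otimes>\<^sub>M (M2 \<Otimes>\<^sub>M \<nu>)"
proof -
  let ?M = "M1 \<Otimes>\<^sub>M (M2 \<Otimes>\<^sub>M \<mu>)"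
  have "M1 \<Otimes>\<^sub>M (M2 \<Otimes>\<^sub>M \<nu>) = distr ?M ?M \<Phi>"
  proof (rule triple_pair_measure_eqI[OF M1 M2 \<nu>])
    show "sets (distr ?M ?M \<Phi>) = sets (M1 \<Otimes>\<^sub>M (M2 \<Otimes>\<^sub>M \<nu>))"
      using sets_\<nu> by (simp cong: sets_pair_measure_cong)
    fix A B C assume A: "A \<in> sets M1" and B: "B \<in> sets M2" and "C \<in> sets \<nu>"
    then have C: "C \<in> sets \<mu>" by (simp add: sets_\<nu>)
    have ABC: "A \<times> B \<times> C \<in> sets ?M"
      using A B C by simp
    have "emeasure (distr ?M ?M \<Phi>) (A \<times> B \<times> C) = (\<integral>\<^sup>+x. indicator (A \<times> B \<times> C) x \<partial>distr ?M ?M \<Phi>)"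
      using ABC by simp
    also have "\<dots> = (\<integral>\<^sup>+x. indicator (A \<times> B \<times> C) (\<Phi> x) \<partial>?M)"
      using ABC \<Phi> by (intro nn_integral_distr) simp_all
    also have "\<dots> = (\<integral>\<^sup>+z. \<integral>\<^sup>+\<omega>. \<integral>\<^sup>+\<upsilon>. indicator (A \<times> B \<times> C) (\<Phi> (\<omega>, \<upsilon>, z)) \<partial>M2 \<partial>M1 \<partial>\<mu>)"
      using M1 M2 \<mu> measurable_compose[OF \<Phi> borel_measurable_indicator[OF ABC]]
      by (intro nn_integral_triple_swap finite_measure.sigma_finite_measure)
        (simp_all add: comp_def)
    also have "\<dots> = (\<integral>\<^sup>+z. emeasure M1 A * emeasure M2 B * \<kappa> z C \<partial>\<mu>)"
      using A B C by (intro nn_integral_cong fibre)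
    also have "\<dots> = emeasure M1 A * emeasure M2 B * emeasure \<nu> C"
      using C by (simp add: nn_integral_cmult \<kappa> emeasure_\<nu>)
    finally show "emeasure (distr ?M ?M \<Phi>) (A \<times> B \<times> C)
        = emeasure M1 A * emeasure M2 B * emeasure \<nu> C" .
  qed
  then show ?thesis ..
qed

section \<open>Bernoulli shifts\<close>

lemma measurable_shift_PiM [measurable]: "shift \<in> measurable (\<Pi>\<^sub>M i\<in>UNIV. M) (\<Pi>\<^sub>M i\<in>UNIV. M)"
  unfolding shift_def by (rule measurable_PiM_single') (auto simp: space_PiM)

lemma nn_integral_indicator_shift:
  fixes M :: "nat measure"
  assumes "prob_space M" and f: "f \<in> borel_measurable M" and A: "A \<in> sets (\<Pi>\<^sub>M i\<in>UNIV. M)"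
  shows "(\<integral>\<^sup>+\<omega>. f (\<omega> 0) * indicator A (shift \<omega>) \<partial>(\<Pi>\<^sub>M i\<in>UNIV. M))
    = (\<integral>\<^sup>+x. f x \<partial>M) * emeasure (\<Pi>\<^sub>M i\<in>UNIV. M) A"
proof -
  interpret prob_space M by fact
  interpret sequence_space M ..
  note [measurable] = f A
  have cons: "(\<lambda>(s, \<omega>). case_nat s \<omega>) \<in> measurable (M \<Otimes>\<^sub>M S) S"
    by (simp add: split_beta') measurable
  have "(\<integral>\<^sup>+\<omega>. f (\<omega> 0) * indicator A (shift \<omega>) \<partial>S)
      = (\<integral>\<^sup>+\<omega>. f (\<omega> 0) * indicator A (shift \<omega>) \<partial>distr (M \<Otimes>\<^sub>M S) S (\<lambda>(s, \<omega>). case_nat s \<omega>))"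
    by (simp only: PiM_iter)
  also have "\<dots> = (\<integral>\<^sup>+(s, \<omega>). f s * indicator A \<omega> \<partial>(M \<Otimes>\<^sub>M S))"
    by (subst nn_integral_distr[OF cons]) (measurable, simp add: split_beta' shift_def)
  also have "\<dots> = (\<integral>\<^sup>+s. \<integral>\<^sup>+\<omega>. f s * indicator A \<omega> \<partial>S \<partial>M)"
    by (subst nn_integral_fst[symmetric]) (simp_all add: split_beta')
  also have "\<dots> = (\<integral>\<^sup>+s. f s * emeasure S A \<partial>M)"
    using A by (simp add: nn_integral_cmult_indicator)
  also have "\<dots> = (\<integral>\<^sup>+x. f x \<partial>M) * emeasure S A"
    using f by (rule nn_integral_multc)
  finally show ?thesis .
qed

lemma nn_integral_indicator_shift_or_id:
  fixes M :: "nat measure"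
  assumes M: "prob_space M" and f: "f \<in> borel_measurable M" and A: "A \<in> sets (\<Pi>\<^sub>M i\<in>UNIV. M)"
    and \<psi>: "\<psi> = shift \<or> \<psi> = id \<and> (\<exists>c. \<forall>x\<in>space M. f x = c)"
  shows "(\<integral>\<^sup>+\<omega>. f (\<omega> 0) * indicator A (\<psi> \<omega>) \<partial>(\<Pi>\<^sub>M i\<in>UNIV. M))
    = (\<integral>\<^sup>+x. f x \<partial>M) * emeasure (\<Pi>\<^sub>M i\<in>UNIV. M) A"
proof (cases "\<psi> = shift")
  case True
  then show ?thesis using nn_integral_indicator_shift[OF M f A] by simp
next
  case False
  interpret prob_space M by fact
  from \<psi> False obtain c where \<psi>_id: "\<psi> = id" and fc: "\<And>x. x \<in> space M \<Longrightarrow> f x = c"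
    by blast
  have "(\<integral>\<^sup>+\<omega>. f (\<omega> 0) * indicator A (\<psi> \<omega>) \<partial>(\<Pi>\<^sub>M i\<in>UNIV. M))
      = (\<integral>\<^sup>+\<omega>. c * indicator A \<omega> \<partial>(\<Pi>\<^sub>M i\<in>UNIV. M))"
    by (intro nn_integral_cong) (simp add: \<psi>_id fc space_PiM PiE_iff)
  also have "\<dots> = c * emeasure (\<Pi>\<^sub>M i\<in>UNIV. M) A"
    using A by (rule nn_integral_cmult_indicator)
  also have "c = (\<integral>\<^sup>+x. f x \<partial>M)"
    by (simp add: fc nn_integral_cong[of M f "\<lambda>_. c"] emeasure_space_1)
  finally show ?thesis .
qed

lemma nn_integral_indicator_digit_pair:
  fixes M1 M2 :: "nat measure" and h :: "nat \<Rightarrow> nat \<Rightarrow> ennreal"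
  assumes M1: "prob_space M1" and M2: "prob_space M2"
    and h: "case_prod h \<in> borel_measurable (M1 \<Otimes>\<^sub>M M2)"
    and A: "A \<in> sets (\<Pi>\<^sub>M i\<in>UNIV. M1)" and B: "B \<in> sets (\<Pi>\<^sub>M i\<in>UNIV. M2)"
    and \<psi>1: "\<psi>1 = shift \<or> \<psi>1 = id \<and> (\<forall>j\<in>space M2. \<exists>c. \<forall>i\<in>space M1. h i j = c)"
    and \<psi>2: "\<psi>2 = shift \<or> \<psi>2 = id \<and> (\<forall>i\<in>space M1. \<exists>c. \<forall>j\<in>space M2. h i j = c)"
  shows "(\<integral>\<^sup>+\<omega>. \<integral>\<^sup>+\<upsilon>. indicator A (\<psi>1 \<omega>) * indicator B (\<psi>2 \<upsilon>) * h (\<omega> 0) (\<upsilon> 0)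
       \<partial>(\<Pi>\<^sub>M i\<in>UNIV. M2) \<partial>(\<Pi>\<^sub>M i\<in>UNIV. M1))
    = emeasure (\<Pi>\<^sub>M i\<in>UNIV. M1) A * emeasure (\<Pi>\<^sub>M i\<in>UNIV. M2) B * (\<integral>\<^sup>+i. \<integral>\<^sup>+j. h i j \<partial>M2 \<partial>M1)"
    (is "?lhs = emeasure ?S1 A * emeasure ?S2 B * _")
proof -
  interpret M2: prob_space M2 by fact
  define g where "g i = (\<integral>\<^sup>+j. h i j \<partial>M2)" for i
  have "\<psi>1 \<in> measurable ?S1 ?S1" "\<psi>2 \<in> measurable ?S2 ?S2"
    using \<psi>1 \<psi>2 by auto
  then have [measurable]: "(\<lambda>\<omega>. indicator A (\<psi>1 \<omega>) :: ennreal) \<in> borel_measurable ?S1"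
      "(\<lambda>\<upsilon>. indicator B (\<psi>2 \<upsilon>) :: ennreal) \<in> borel_measurable ?S2"
    by (simp_all add: measurable_compose[OF _ borel_measurable_indicator] A B)
  have h_i [measurable]: "(\<lambda>j. h i j) \<in> borel_measurable M2" if "i \<in> space M1" for i
    using measurable_compose[OF measurable_Pair1'[OF that] h] by simp
  have g [measurable]: "g \<in> borel_measurable M1"
    unfolding g_def using h by (rule M2.borel_measurable_nn_integral)
  have "(\<integral>\<^sup>+\<upsilon>. indicator A (\<psi>1 \<omega>) * indicator B (\<psi>2 \<upsilon>) * h (\<omega> 0) (\<upsilon> 0) \<partial>?S2)
      = g (\<omega> 0) * indicator A (\<psi>1 \<omega>) * emeasure ?S2 B" if "\<omega> \<in> space ?S1" for \<omega>
  proof -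
    have \<omega>0: "\<omega> 0 \<in> space M1"
      using that by (simp add: space_PiM PiE_iff)
    have "(\<integral>\<^sup>+\<upsilon>. indicator A (\<psi>1 \<omega>) * indicator B (\<psi>2 \<upsilon>) * h (\<omega> 0) (\<upsilon> 0) \<partial>?S2)
        = indicator A (\<psi>1 \<omega>) * (\<integral>\<^sup>+\<upsilon>. h (\<omega> 0) (\<upsilon> 0) * indicator B (\<psi>2 \<upsilon>) \<partial>?S2)"
      using \<omega>0 by (subst nn_integral_cmult[symmetric]) (measurable, simp add: ac_simps)
    also have "(\<integral>\<^sup>+\<upsilon>. h (\<omega> 0) (\<upsilon> 0) * indicator B (\<psi>2 \<upsilon>) \<partial>?S2) = g (\<omega> 0) * emeasure ?S2 B"
      unfolding g_def
      by (rule nn_integral_indicator_shift_or_id[OF M2 h_i[OF \<omega>0] B]) (use \<psi>2 \<omega>0 in blast)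
    finally show ?thesis by (simp add: ac_simps)
  qed
  then have "?lhs = (\<integral>\<^sup>+\<omega>. g (\<omega> 0) * indicator A (\<psi>1 \<omega>) * emeasure ?S2 B \<partial>?S1)"
    by (rule nn_integral_cong)
  also have "\<dots> = (\<integral>\<^sup>+\<omega>. g (\<omega> 0) * indicator A (\<psi>1 \<omega>) \<partial>?S1) * emeasure ?S2 B"
    by (rule nn_integral_multc) measurable
  also have "(\<integral>\<^sup>+\<omega>. g (\<omega> 0) * indicator A (\<psi>1 \<omega>) \<partial>?S1) = (\<integral>\<^sup>+i. g i \<partial>M1) * emeasure ?S1 A"
  proof (rule nn_integral_indicator_shift_or_id[OF M1 g A])
    show "\<psi>1 = shift \<or> \<psi>1 = id \<and> (\<exists>c. \<forall>i\<in>space M1. g i = c)"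
    proof (cases "\<psi>1 = shift")
      case False
      obtain i0 where "i0 \<in> space M1"
        using prob_space.not_empty[OF M1] by blast
      with \<psi>1 False have "\<forall>i\<in>space M1. g i = g i0"
        unfolding g_def by (metis (no_types, lifting) nn_integral_cong)
      with \<psi>1 show ?thesis by blast
    qed simp
  qed
  finally show ?thesis by (simp add: g_def ac_simps)
qed

definition m1_digit :: "real \<Rightarrow> nat measure" where
  "m1_digit p = density (count_space {0, 1}) (\<lambda>i. ennreal (if i = 0 then p else 1 - p))"

definition m2_digit :: "real \<Rightarrow> real \<Rightarrow> nat measure" where
  "m2_digit s t = density (count_space {0, 1, 2})
     (\<lambda>i. ennreal (if i = 0 then s else if i = 1 then t else 1 - s - t))"

lemma m1_eq_PiM: "m1 p = (\<Pi>\<^sub>M i\<in>UNIV. m1_digit p)"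
  by (simp add: m1_def m1_digit_def)

lemma m2_eq_PiM: "m2 s t = (\<Pi>\<^sub>M i\<in>UNIV. m2_digit s t)"
  by (simp add: m2_def m2_digit_def)

lemma nn_integral_m1_digit:
  "(\<integral>\<^sup>+i. f i \<partial>m1_digit p) = ennreal p * f 0 + ennreal (1 - p) * f 1"
  by (simp add: m1_digit_def nn_integral_density nn_integral_count_space_finite)

lemma nn_integral_m2_digit:
  "(\<integral>\<^sup>+j. f j \<partial>m2_digit s t) = ennreal s * f 0 + ennreal t * f 1 + ennreal (1 - s - t) * f 2"
  by (simp add: m2_digit_def nn_integral_density nn_integral_count_space_finite add.assoc)

lemma prob_space_m1_digit: "0 \<le> p \<Longrightarrow> p \<le> 1 \<Longrightarrow> prob_space (m1_digit p)"
  by (rule prob_spaceI)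
    (simp add: m1_digit_def emeasure_density nn_integral_count_space_finite flip: ennreal_plus)

lemma prob_space_m2_digit: "0 \<le> s \<Longrightarrow> 0 \<le> t \<Longrightarrow> s + t \<le> 1 \<Longrightarrow> prob_space (m2_digit s t)"
  by (rule prob_spaceI)
    (simp add: m2_digit_def emeasure_density nn_integral_count_space_finite flip: ennreal_plus)

lemma prob_space_m1: "0 \<le> p \<Longrightarrow> p \<le> 1 \<Longrightarrow> prob_space (m1 p)"
  unfolding m1_eq_PiM by (intro prob_space_PiM prob_space_m1_digit)

lemma prob_space_m2: "0 \<le> s \<Longrightarrow> 0 \<le> t \<Longrightarrow> s + t \<le> 1 \<Longrightarrow> prob_space (m2 s t)"
  unfolding m2_eq_PiM by (intro prob_space_PiM prob_space_m2_digit)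

lemma measurable_digit_pair [measurable]:
  "h \<in> borel_measurable (m1_digit p \<Otimes>\<^sub>M m2_digit s t)"
proof -
  have "sets (m1_digit p \<Otimes>\<^sub>M m2_digit s t)
      = sets (count_space {0, 1} \<Otimes>\<^sub>M count_space {0, 1, 2::nat})"
    by (rule sets_pair_measure_cong) (simp_all add: m1_digit_def m2_digit_def)
  also have "\<dots> = sets (count_space ({0, 1} \<times> {0, 1, 2}))"
    by (subst pair_measure_countable) simp_all
  finally have sets_eq:
    "sets (m1_digit p \<Otimes>\<^sub>M m2_digit s t) = sets (count_space ({0, 1} \<times> {0, 1, 2::nat}))" .
  show ?thesis
    unfolding measurable_cong_sets[OF sets_eq refl] by simp
qed

lemma nn_integral_digits_eq_sum_wt:
  assumes "0 \<le> p" "p \<le> 1" "0 \<le> s" "0 \<le> t" "s + t \<le> 1"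
  shows "(\<integral>\<^sup>+i. \<integral>\<^sup>+j. g (3 * i + j + 1) \<partial>m2_digit s t \<partial>m1_digit p)
    = (\<Sum>k\<in>{1..6}. ennreal (wt p s t k) * g k)"
proof -
  have "{1..6::nat} = {1, 2, 3, 4, 5, 6}"
    by auto
  then have sum6: "(\<Sum>k\<in>{1..6}. f k) = f 1 + f 2 + f 3 + f 4 + f 5 + f 6" for f :: "nat \<Rightarrow> ennreal"
    by (simp add: ac_simps)
  have w: "wt p s t 1 = p * s" "wt p s t 2 = p * t" "wt p s t 3 = p * (1 - s - t)"
    "wt p s t 4 = (1 - p) * s" "wt p s t 5 = (1 - p) * t" "wt p s t 6 = (1 - p) * (1 - s - t)"
    by (simp_all add: wt_def)
  show ?thesis
    unfolding sum6 w using assms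
    by (simp add: nn_integral_m1_digit nn_integral_m2_digit ennreal_mult distrib_left ac_simps
        flip: One_nat_def)
qed

lemma measurable_first_digit [measurable]:
  "(\<lambda>\<omega>. \<omega> 0) \<in> measurable (m1 p) (count_space UNIV)"
  "(\<lambda>\<omega>. \<omega> 0) \<in> measurable (m2 s t) (count_space UNIV)"
  unfolding m1_eq_PiM m2_eq_PiM
  by (intro measurable_compose[OF measurable_component_singleton];
      simp add: m1_digit_def m2_digit_def measurable_cong_sets[OF sets_density refl])+

lemma measurable_shift_m1_m2 [measurable]:
  "shift \<in> measurable (m1 p) (m1 p)" "shift \<in> measurable (m2 s t) (m2 s t)"
  by (simp_all add: m1_eq_PiM m2_eq_PiM)

lemma space_m1_m2_first_digit:
  "\<omega> \<in> space (m1 p) \<Longrightarrow> \<omega> 0 \<in> {0, 1}" "\<upsilon> \<in> space (m2 s t) \<Longrightarrow> \<upsilon> 0 \<in> {0, 1, 2}"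
  by (auto simp: m1_eq_PiM m2_eq_PiM m1_digit_def m2_digit_def space_PiM PiE_iff
      dest!: spec[of _ 0])

section \<open>The skew products\<close>

text \<open>
  \<open>\<Phi>\<close> moves \<open>z\<close> by \<open>\<tau>\<^sub>k\<close> with \<open>k = 3 \<omega> 0 + \<upsilon> 0 + 1\<close>, and each digit sequence either by the
  shift (its first digit is consumed) or not at all; the latter is allowed only if \<open>\<tau>\<^sub>k z\<close> does
  not depend on that digit.
\<close>
definition skew_fibre ::
  "real \<Rightarrow> ((nat \<Rightarrow> nat) \<times> (nat \<Rightarrow> nat) \<times> real \<times> real \<Rightarrow> (nat \<Rightarrow> nat) \<times> (nat \<Rightarrow> nat) \<times> real \<times> real)
    \<Rightarrow> real \<times> real \<Rightarrow> bool" where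
  "skew_fibre \<beta> \<Phi> z \<longleftrightarrow> (\<exists>\<psi>1 \<psi>2.
     (\<forall>\<omega> \<upsilon>. \<omega> 0 \<in> {0, 1} \<longrightarrow> \<upsilon> 0 \<in> {0, 1, 2} \<longrightarrow>
        \<Phi> (\<omega>, \<upsilon>, z) = (\<psi>1 \<omega>, \<psi>2 \<upsilon>, tau \<beta> (3 * \<omega> 0 + \<upsilon> 0 + 1) z)) \<and>
     (\<psi>1 = shift \<or> \<psi>1 = id \<and> (\<forall>j\<in>{0, 1, 2}. \<exists>c. \<forall>i\<in>{0, 1}. tau \<beta> (3 * i + j + 1) z = c)) \<and>
     (\<psi>2 = shift \<or> \<psi>2 = id \<and> (\<forall>i\<in>{0, 1}. \<exists>c. \<forall>j\<in>{0, 1, 2}. tau \<beta> (3 * i + j + 1) z = c)))"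

lemma skew_fibreE:
  assumes "skew_fibre \<beta> \<Phi> z"
  obtains \<psi>1 \<psi>2 where
    "\<forall>\<omega> \<upsilon>. \<omega> 0 \<in> {0, 1} \<longrightarrow> \<upsilon> 0 \<in> {0, 1, 2} \<longrightarrow>
      \<Phi> (\<omega>, \<upsilon>, z) = (\<psi>1 \<omega>, \<psi>2 \<upsilon>, tau \<beta> (3 * \<omega> 0 + \<upsilon> 0 + 1) z)"
    "\<psi>1 = shift \<or> \<psi>1 = id \<and> (\<forall>j\<in>{0, 1, 2}. \<exists>c. \<forall>i\<in>{0, 1}. tau \<beta> (3 * i + j + 1) z = c)"
    "\<psi>2 = shift \<or> \<psi>2 = id \<and> (\<forall>i\<in>{0, 1}. \<exists>c. \<forall>j\<in>{0, 1, 2}. tau \<beta> (3 * i + j + 1) z = c)"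
  using assms unfolding skew_fibre_def by (elim exE conjE) (rule that; assumption)

lemma Rmap_skew_fibre: "skew_fibre \<beta> (Rmap \<beta>) z"
  unfolding skew_fibre_def Rmap_def by (intro exI[of _ shift]) simp

lemma Kmap_skew_fibre:
  assumes "z \<in> Sb \<beta>"
  shows "skew_fibre \<beta> (Kmap \<beta>) z"
proof -
  consider "z \<in> E0 \<beta>" | "z \<notin> E0 \<beta>" "z \<in> E1 \<beta>" | "z \<notin> E0 \<beta>" "z \<notin> E1 \<beta>" "z \<in> E2 \<beta>"
    | "z \<notin> E0 \<beta>" "z \<notin> E1 \<beta>" "z \<notin> E2 \<beta>" "z \<in> C01 \<beta>"
    | "z \<notin> E0 \<beta>" "z \<notin> E1 \<beta>" "z \<notin> E2 \<beta>" "z \<notin> C01 \<beta>" "z \<in> C12 \<beta>"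
    | "z \<notin> E0 \<beta>" "z \<notin> E1 \<beta>" "z \<notin> E2 \<beta>" "z \<notin> C01 \<beta>" "z \<notin> C12 \<beta>" "z \<in> C02 \<beta>"
    | "z \<notin> E0 \<beta>" "z \<notin> E1 \<beta>" "z \<notin> E2 \<beta>" "z \<notin> C01 \<beta>" "z \<notin> C12 \<beta>" "z \<notin> C02 \<beta>" "z \<in> C012 \<beta>"
    using Sb_regions_cover[OF assms] by blast
  then show ?thesis
  proof cases
    case 1
    then show ?thesis
      unfolding skew_fibre_def by (intro exI[of _ id]) (simp add: Kmap_def tau_def adig_def)
  next
    case 2
    then show ?thesis
      unfolding skew_fibre_def by (intro exI[of _ id]) (simp add: Kmap_def tau_def adig_def)
  next
    case 3
    then show ?thesis
      unfolding skew_fibre_def by (intro exI[of _ id]) (simp add: Kmap_def tau_def adig_def)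
  next
    case 4
    then show ?thesis
      unfolding skew_fibre_def
      by (intro exI[of _ shift] exI[of _ id]) (auto simp: Kmap_def tau_def adig_def)
  next
    case 5
    then show ?thesis
      unfolding skew_fibre_def
      by (intro exI[of _ shift] exI[of _ id]) (auto simp: Kmap_def tau_def adig_def)
  next
    case 6
    then show ?thesis
      unfolding skew_fibre_def
      by (intro exI[of _ shift] exI[of _ id]) (auto simp: Kmap_def tau_def adig_def)
  next
    case 7
    then show ?thesis
      unfolding skew_fibre_def
      by (intro exI[of _ id] exI[of _ shift]) (auto simp: Kmap_def tau_def adig_def)
  qed
qed

lemma borel_measurable_snd_snd:
  assumes "sets \<mu> = sets (restrict_space borel S)"
  shows "(\<lambda>x. snd (snd x)) \<in> borel_measurable (M1 \<Otimes>\<^sub>M (M2 \<Otimes>\<^sub>M \<mu>))"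
proof -
  have "(\<lambda>z. z) \<in> borel_measurable \<mu>"
    unfolding measurable_cong_sets[OF assms refl] by (rule measurable_restrict_space1) simp
  then show ?thesis
    using measurable_compose[OF measurable_compose[OF measurable_snd measurable_snd]]
    by (simp add: comp_def)
qed

lemma measurable_into_restrict_borel:
  assumes "sets \<mu> = sets (restrict_space borel S)"
    and "f \<in> borel_measurable N" and "\<And>x. x \<in> space N \<Longrightarrow> f x \<in> S"
  shows "f \<in> measurable N \<mu>"
  unfolding measurable_cong_sets[OF refl assms(1)]
  using assms(2,3) by (intro measurable_restrict_space2) auto

lemma measurable_skew_product:
  assumes \<beta>: "1 < \<beta>" "\<beta> < 3/2" and sets_\<mu>: "sets \<mu> = sets (restrict_space borel (Sb \<beta>))"
    and \<Phi>1: "(\<lambda>x. fst (\<Phi> x)) \<in> measurable (m1 p \<Otimes>\<^sub>M (m2 s t \<Otimes>\<^sub>M \<mu>)) (m1 p)"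
    and \<Phi>2: "(\<lambda>x. fst (snd (\<Phi> x))) \<in> measurable (m1 p \<Otimes>\<^sub>M (m2 s t \<Otimes>\<^sub>M \<mu>)) (m2 s t)"
    and \<Phi>: "\<And>z. z \<in> Sb \<beta> \<Longrightarrow> skew_fibre \<beta> \<Phi> z"
  shows "\<Phi> \<in> measurable (m1 p \<Otimes>\<^sub>M (m2 s t \<Otimes>\<^sub>M \<mu>)) (m1 p \<Otimes>\<^sub>M (m2 s t \<Otimes>\<^sub>M \<mu>))"
proof -
  let ?M = "m1 p \<Otimes>\<^sub>M (m2 s t \<Otimes>\<^sub>M \<mu>)"
  let ?T = "\<lambda>x. tau \<beta> (3 * fst x 0 + fst (snd x) 0 + 1) (snd (snd x))"
  note [measurable] = borel_measurable_snd_snd[OF sets_\<mu>]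
  have [measurable]: "(\<lambda>x. fst x 0) \<in> measurable ?M (count_space UNIV)"
    "(\<lambda>x. fst (snd x) 0) \<in> measurable ?M (count_space UNIV)"
    using measurable_compose[OF measurable_fst measurable_first_digit(1)]
      measurable_compose[OF measurable_compose[OF measurable_snd measurable_fst]
        measurable_first_digit(2)]
    by (simp_all add: comp_def)
  have space_M: "fst x 0 \<in> {0, 1}" "fst (snd x) 0 \<in> {0, 1, 2}" "snd (snd x) \<in> Sb \<beta>"
    if "x \<in> space ?M" for x
  proof -
    have \<omega>: "fst x \<in> space (m1 p)" and \<upsilon>: "fst (snd x) \<in> space (m2 s t)"
      and z: "snd (snd x) \<in> space \<mu>"
      using that by (auto simp: space_pair_measure)
    show "fst x 0 \<in> {0, 1}"
      using space_m1_m2_first_digit(1)[OF \<omega>] .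
    show "fst (snd x) 0 \<in> {0, 1, 2}"
      using space_m1_m2_first_digit(2)[OF \<upsilon>] .
    show "snd (snd x) \<in> Sb \<beta>"
      using z sets_eq_imp_space_eq[OF sets_\<mu>] by (simp add: space_restrict_space)
  qed
  have "?T \<in> measurable ?M \<mu>"
  proof (rule measurable_into_restrict_borel[OF sets_\<mu>])
    show "?T \<in> borel_measurable ?M"
      by measurable
    show "?T x \<in> Sb \<beta>" if "x \<in> space ?M" for x
      by (rule tau_mem_Sb[OF \<beta> space_M(3)[OF that]])
  qed
  moreover have "snd (snd (\<Phi> x)) = ?T x" if "x \<in> space ?M" for x
  proof (rule skew_fibreE[OF \<Phi>[OF space_M(3)[OF that]]])
    fix \<psi>1 \<psi>2
    assume "\<forall>\<omega> \<upsilon>. \<omega> 0 \<in> {0, 1} \<longrightarrow> \<upsilon> 0 \<in> {0, 1, 2} \<longrightarrow>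
      \<Phi> (\<omega>, \<upsilon>, snd (snd x)) = (\<psi>1 \<omega>, \<psi>2 \<upsilon>, tau \<beta> (3 * \<omega> 0 + \<upsilon> 0 + 1) (snd (snd x)))"
    then have "\<Phi> (fst x, fst (snd x), snd (snd x)) = (\<psi>1 (fst x), \<psi>2 (fst (snd x)), ?T x)"
      using space_M(1,2)[OF that] by blast
    then show ?thesis
      by simp
  qed
  ultimately have "(\<lambda>x. snd (snd (\<Phi> x))) \<in> measurable ?M \<mu>"
    by (simp cong: measurable_cong)
  with \<Phi>1 \<Phi>2 show ?thesis
    by (simp add: measurable_pair_iff comp_def)
qed

lemma Kmap_measurable:
  assumes \<beta>: "1 < \<beta>" "\<beta> < 3/2" and sets_\<mu>: "sets \<mu> = sets (restrict_space borel (Sb \<beta>))"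
  shows "Kmap \<beta> \<in> measurable (m1 p \<Otimes>\<^sub>M (m2 s t \<Otimes>\<^sub>M \<mu>)) (m1 p \<Otimes>\<^sub>M (m2 s t \<Otimes>\<^sub>M \<mu>))"
proof (rule measurable_skew_product[OF \<beta> sets_\<mu> _ _ Kmap_skew_fibre])
  note [measurable] = borel_measurable_snd_snd[OF sets_\<mu>]
  show "(\<lambda>x. fst (Kmap \<beta> x)) \<in> measurable (m1 p \<Otimes>\<^sub>M (m2 s t \<Otimes>\<^sub>M \<mu>)) (m1 p)"
    unfolding Kmap_def case_prod_unfold by (simp only: if_distrib[of fst] fst_conv) measurable
  show "(\<lambda>x. fst (snd (Kmap \<beta> x))) \<in> measurable (m1 p \<Otimes>\<^sub>M (m2 s t \<Otimes>\<^sub>M \<mu>)) (m2 s t)"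
    unfolding Kmap_def case_prod_unfold
    by (simp only: if_distrib[of fst] if_distrib[of snd] fst_conv snd_conv) measurable
qed

lemma Rmap_measurable:
  assumes \<beta>: "1 < \<beta>" "\<beta> < 3/2" and sets_\<mu>: "sets \<mu> = sets (restrict_space borel (Sb \<beta>))"
  shows "Rmap \<beta> \<in> measurable (m1 p \<Otimes>\<^sub>M (m2 s t \<Otimes>\<^sub>M \<mu>)) (m1 p \<Otimes>\<^sub>M (m2 s t \<Otimes>\<^sub>M \<mu>))"
  by (rule measurable_skew_product[OF \<beta> sets_\<mu> _ _ Rmap_skew_fibre])
    (simp_all add: Rmap_def case_prod_unfold)

definition tau_kernel :: "real \<Rightarrow> real \<Rightarrow> real \<Rightarrow> real \<Rightarrow> real \<times> real \<Rightarrow> (real \<times> real) set \<Rightarrow> ennreal"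
  where "tau_kernel \<beta> p s t z C = (\<Sum>k\<in>{1..6}. ennreal (wt p s t k) * indicator C (tau \<beta> k z))"

lemma nn_integral_skew_fibre:
  assumes "0 \<le> p" "p \<le> 1" "0 \<le> s" "0 \<le> t" "s + t \<le> 1"
    and \<Phi>: "skew_fibre \<beta> \<Phi> z" and A: "A \<in> sets (m1 p)" and B: "B \<in> sets (m2 s t)"
  shows "(\<integral>\<^sup>+\<omega>. \<integral>\<^sup>+\<upsilon>. indicator (A \<times> B \<times> C) (\<Phi> (\<omega>, \<upsilon>, z)) \<partial>m2 s t \<partial>m1 p)
    = emeasure (m1 p) A * emeasure (m2 s t) B * tau_kernel \<beta> p s t z C"
proof -
  define h where "h i j = (indicator C (tau \<beta> (3 * i + j + 1) z) :: ennreal)" for i j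
  obtain \<psi>1 \<psi>2 where
    \<Phi>_eq: "\<forall>\<omega> \<upsilon>. \<omega> 0 \<in> {0, 1} \<longrightarrow> \<upsilon> 0 \<in> {0, 1, 2} \<longrightarrow>
      \<Phi> (\<omega>, \<upsilon>, z) = (\<psi>1 \<omega>, \<psi>2 \<upsilon>, tau \<beta> (3 * \<omega> 0 + \<upsilon> 0 + 1) z)"
    and \<psi>1: "\<psi>1 = shift \<or> \<psi>1 = id \<and> (\<forall>j\<in>{0, 1, 2}. \<exists>c. \<forall>i\<in>{0, 1}. tau \<beta> (3 * i + j + 1) z = c)"
    and \<psi>2: "\<psi>2 = shift \<or> \<psi>2 = id \<and> (\<forall>i\<in>{0, 1}. \<exists>c. \<forall>j\<in>{0, 1, 2}. tau \<beta> (3 * i + j + 1) z = c)"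
    using \<Phi> by (rule skew_fibreE)
  have "indicator (A \<times> B \<times> C) (\<Phi> (\<omega>, \<upsilon>, z))
      = indicator A (\<psi>1 \<omega>) * indicator B (\<psi>2 \<upsilon>) * h (\<omega> 0) (\<upsilon> 0)"
    if "\<omega> \<in> space (m1 p)" "\<upsilon> \<in> space (m2 s t)" for \<omega> \<upsilon>
    using \<Phi>_eq[rule_format, of \<omega> \<upsilon>] space_m1_m2_first_digit(1)[OF that(1)]
      space_m1_m2_first_digit(2)[OF that(2)]
    by (simp add: h_def indicator_times mult.assoc)
  then have "(\<integral>\<^sup>+\<omega>. \<integral>\<^sup>+\<upsilon>. indicator (A \<times> B \<times> C) (\<Phi> (\<omega>, \<upsilon>, z)) \<partial>m2 s t \<partial>m1 p)
      = (\<integral>\<^sup>+\<omega>. \<integral>\<^sup>+\<upsilon>. indicator A (\<psi>1 \<omega>) * indicator B (\<psi>2 \<upsilon>) * h (\<omega> 0) (\<upsilon> 0) \<partial>m2 s t \<partial>m1 p)"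
    by (intro nn_integral_cong) simp
  also have "\<dots> = emeasure (m1 p) A * emeasure (m2 s t) B
      * (\<integral>\<^sup>+i. \<integral>\<^sup>+j. h i j \<partial>m2_digit s t \<partial>m1_digit p)"
    unfolding m1_eq_PiM m2_eq_PiM
  proof (rule nn_integral_indicator_digit_pair)
    show "prob_space (m1_digit p)" "prob_space (m2_digit s t)"
      using assms by (simp_all add: prob_space_m1_digit prob_space_m2_digit)
    show "A \<in> sets (\<Pi>\<^sub>M i\<in>UNIV. m1_digit p)" "B \<in> sets (\<Pi>\<^sub>M i\<in>UNIV. m2_digit s t)"
      using A B by (simp_all add: m1_eq_PiM m2_eq_PiM)
    show "\<psi>1 = shift \<or> \<psi>1 = id \<and> (\<forall>j\<in>space (m2_digit s t). \<exists>c. \<forall>i\<in>space (m1_digit p). h i j = c)"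
      using \<psi>1 unfolding h_def by (simp add: m1_digit_def m2_digit_def) metis
    show "\<psi>2 = shift \<or> \<psi>2 = id \<and> (\<forall>i\<in>space (m1_digit p). \<exists>c. \<forall>j\<in>space (m2_digit s t). h i j = c)"
      using \<psi>2 unfolding h_def by (simp add: m1_digit_def m2_digit_def) metis
  qed simp
  also have "(\<integral>\<^sup>+i. \<integral>\<^sup>+j. h i j \<partial>m2_digit s t \<partial>m1_digit p) = tau_kernel \<beta> p s t z C"
    unfolding h_def tau_kernel_def using assms(1-5) by (rule nn_integral_digits_eq_sum_wt)
  finally show ?thesis .
qed

lemma countably_additive_weighted_sum:
  assumes "\<And>k. k \<in> K \<Longrightarrow> sets (N k) = \<Sigma>"
  shows "countably_additive \<Sigma> (\<lambda>X. \<Sum>k\<in>K. c k * emeasure (N k) X)"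
proof (rule countably_additiveI)
  fix F :: "nat \<Rightarrow> _"
  assume F: "range F \<subseteq> \<Sigma>" "disjoint_family F" "(\<Union>i. F i) \<in> \<Sigma>"
  have "(\<Sum>i. \<Sum>k\<in>K. c k * emeasure (N k) (F i)) = (\<Sum>k\<in>K. \<Sum>i. c k * emeasure (N k) (F i))"
    by (rule suminf_sum) simp
  also have "\<dots> = (\<Sum>k\<in>K. c k * emeasure (N k) (\<Union>i. F i))"
    using F assms by (intro sum.cong refl) (simp add: ennreal_suminf_cmult suminf_emeasure)
  finally show "(\<Sum>i. \<Sum>k\<in>K. c k * emeasure (N k) (F i)) = (\<Sum>k\<in>K. c k * emeasure (N k) (\<Union>i. F i))" .
qed

lemma sets_nu: "sets (nu \<beta> p s t \<mu>) = sets (restrict_space borel (Sb \<beta>))"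
proof -
  have "sets (restrict_space borel (Sb \<beta>)) \<subseteq> Pow (Sb \<beta>)"
    using sets.space_closed[of "restrict_space borel (Sb \<beta>)"] by (simp add: space_restrict_space)
  then show ?thesis
    unfolding nu_def using sets.sigma_sets_eq[of "restrict_space borel (Sb \<beta>)"]
    by (simp add: space_restrict_space)
qed

lemma emeasure_nu:
  assumes \<beta>: "1 < \<beta>" "\<beta> < 3/2" and sets_\<mu>: "sets \<mu> = sets (restrict_space borel (Sb \<beta>))"
    and C: "C \<in> sets \<mu>"
  shows "emeasure (nu \<beta> p s t \<mu>) C = (\<integral>\<^sup>+z. tau_kernel \<beta> p s t z C \<partial>\<mu>)"
proof -
  let ?R = "restrict_space borel (Sb \<beta>)"
  have [measurable]: "tau \<beta> k \<in> measurable \<mu> ?R" for k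
    unfolding measurable_cong_sets[OF sets_\<mu> refl]
    by (rule measurable_restrict_space2)
      (auto simp: space_restrict_space intro: tau_mem_Sb[OF \<beta>] measurable_restrict_space1)
  have C_R [measurable]: "C \<in> sets ?R"
    using C sets_\<mu> by simp
  let ?F = "\<lambda>A. \<Sum>k\<in>{1..6}. ennreal (wt p s t k) * emeasure (distr \<mu> ?R (tau \<beta> k)) A"
  have "emeasure (nu \<beta> p s t \<mu>) C = ?F C"
    unfolding nu_def
  proof (rule emeasure_measure_of_sigma)
    show "sigma_algebra (Sb \<beta>) (sets ?R)"
      using sets.sigma_algebra_axioms[of ?R] by (simp add: space_restrict_space)
    show "positive (sets ?R) ?F"
      by (simp add: positive_def)
    show "countably_additive (sets ?R) ?F"
      by (rule countably_additive_weighted_sum) simp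
  qed (rule C_R)
  also have "\<dots> = (\<Sum>k\<in>{1..6}. \<integral>\<^sup>+z. ennreal (wt p s t k) * indicator C (tau \<beta> k z) \<partial>\<mu>)"
  proof (intro sum.cong refl)
    fix k
    have "emeasure (distr \<mu> ?R (tau \<beta> k)) C = (\<integral>\<^sup>+x. indicator C x \<partial>distr \<mu> ?R (tau \<beta> k))"
      by simp
    also have "\<dots> = (\<integral>\<^sup>+z. indicator C (tau \<beta> k z) \<partial>\<mu>)"
      by (rule nn_integral_distr) measurable
    finally show "ennreal (wt p s t k) * emeasure (distr \<mu> ?R (tau \<beta> k)) C
        = (\<integral>\<^sup>+z. ennreal (wt p s t k) * indicator C (tau \<beta> k z) \<partial>\<mu>)"
      by (simp add: nn_integral_cmult)
  qed
  also have "\<dots> = (\<integral>\<^sup>+z. tau_kernel \<beta> p s t z C \<partial>\<mu>)"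
    unfolding tau_kernel_def by (rule nn_integral_sum[symmetric]) measurable
  finally show ?thesis .
qed

lemma tau_kernel_Sb_eq_1:
  assumes \<beta>: "1 < \<beta>" "\<beta> < 3/2" and "0 \<le> p" "p \<le> 1" "0 \<le> s" "0 \<le> t" "s + t \<le> 1"
    and z: "z \<in> Sb \<beta>"
  shows "tau_kernel \<beta> p s t z (Sb \<beta>) = 1"
proof -
  interpret M1: prob_space "m1_digit p"
    using assms by (simp add: prob_space_m1_digit)
  interpret M2: prob_space "m2_digit s t"
    using assms by (simp add: prob_space_m2_digit)
  have "tau_kernel \<beta> p s t z (Sb \<beta>)
      = (\<integral>\<^sup>+i. \<integral>\<^sup>+j. indicator (Sb \<beta>) (tau \<beta> (3 * i + j + 1) z) \<partial>m2_digit s t \<partial>m1_digit p)"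
    unfolding tau_kernel_def using assms(3-7) by (rule nn_integral_digits_eq_sum_wt[symmetric])
  also have "\<dots> = 1"
    using tau_mem_Sb[OF \<beta> z] by (simp add: M1.emeasure_space_1 M2.emeasure_space_1)
  finally show ?thesis .
qed

lemma prob_space_nu:
  assumes \<beta>: "1 < \<beta>" "\<beta> < 3/2" and "0 \<le> p" "p \<le> 1" "0 \<le> s" "0 \<le> t" "s + t \<le> 1"
    and \<mu>: "prob_space \<mu>" and sets_\<mu>: "sets \<mu> = sets (restrict_space borel (Sb \<beta>))"
  shows "prob_space (nu \<beta> p s t \<mu>)"
proof
  interpret prob_space \<mu> by fact
  have space_\<mu>: "space \<mu> = Sb \<beta>"
    using sets_eq_imp_space_eq[OF sets_\<mu>] by (simp add: space_restrict_space)
  have space_nu: "space (nu \<beta> p s t \<mu>) = Sb \<beta>"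
    using sets_eq_imp_space_eq[OF sets_nu] by (simp add: space_restrict_space)
  have "emeasure (nu \<beta> p s t \<mu>) (Sb \<beta>) = (\<integral>\<^sup>+z. tau_kernel \<beta> p s t z (Sb \<beta>) \<partial>\<mu>)"
    using sets.top[of \<mu>] by (intro emeasure_nu[OF \<beta> sets_\<mu>]) (simp add: space_\<mu>)
  also have "\<dots> = (\<integral>\<^sup>+z. 1 \<partial>\<mu>)"
    using assms by (intro nn_integral_cong) (simp add: tau_kernel_Sb_eq_1 space_\<mu>)
  finally show "emeasure (nu \<beta> p s t \<mu>) (space (nu \<beta> p s t \<mu>)) = 1"
    by (simp add: space_nu emeasure_space_1)
qed

lemma distr_skew_product:
  assumes \<beta>: "1 < \<beta>" "\<beta> < 3/2" and weights: "0 \<le> p" "p \<le> 1" "0 \<le> s" "0 \<le> t" "s + t \<le> 1"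
    and \<mu>: "prob_space \<mu>" and sets_\<mu>: "sets \<mu> = sets (restrict_space borel (Sb \<beta>))"
    and \<Phi>_measurable: "\<Phi> \<in> measurable (m1 p \<Otimes>\<^sub>M (m2 s t \<Otimes>\<^sub>M \<mu>)) (m1 p \<Otimes>\<^sub>M (m2 s t \<Otimes>\<^sub>M \<mu>))"
    and \<Phi>: "\<And>z. z \<in> Sb \<beta> \<Longrightarrow> skew_fibre \<beta> \<Phi> z"
  shows "distr (m1 p \<Otimes>\<^sub>M (m2 s t \<Otimes>\<^sub>M \<mu>)) (m1 p \<Otimes>\<^sub>M (m2 s t \<Otimes>\<^sub>M \<mu>)) \<Phi>
    = m1 p \<Otimes>\<^sub>M (m2 s t \<Otimes>\<^sub>M nu \<beta> p s t \<mu>)"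
proof (rule distr_eq_pair_measure_by_fibres[OF _ _ _ _ _ \<Phi>_measurable])
  show "finite_measure (m1 p)" "finite_measure (m2 s t)" "finite_measure \<mu>"
    "finite_measure (nu \<beta> p s t \<mu>)"
    using prob_space_m1 prob_space_m2 prob_space_nu[OF \<beta> weights \<mu> sets_\<mu>] \<mu> weights
    by (simp_all add: prob_space_def)
  show "sets (nu \<beta> p s t \<mu>) = sets \<mu>"
    by (simp add: sets_nu sets_\<mu>)
  have [measurable]: "tau \<beta> k \<in> borel_measurable \<mu>" for k
    unfolding measurable_cong_sets[OF sets_\<mu> refl] by (rule measurable_restrict_space1) simp
  show "(\<lambda>z. tau_kernel \<beta> p s t z C) \<in> borel_measurable \<mu>" if "C \<in> sets \<mu>" for C
  proof -
    have [measurable]: "C \<in> sets borel"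
      using that sets_\<mu> sets_restrict_space_iff[of "Sb \<beta>" borel] by auto
    show ?thesis
      unfolding tau_kernel_def by measurable
  qed
  show "emeasure (nu \<beta> p s t \<mu>) C = (\<integral>\<^sup>+z. tau_kernel \<beta> p s t z C \<partial>\<mu>)" if "C \<in> sets \<mu>" for C
    using that by (rule emeasure_nu[OF \<beta> sets_\<mu>])
  show "(\<integral>\<^sup>+\<omega>. \<integral>\<^sup>+\<upsilon>. indicator (A \<times> B \<times> C) (\<Phi> (\<omega>, \<upsilon>, z)) \<partial>m2 s t \<partial>m1 p)
      = emeasure (m1 p) A * emeasure (m2 s t) B * tau_kernel \<beta> p s t z C"
    if "z \<in> space \<mu>" "A \<in> sets (m1 p)" "B \<in> sets (m2 s t)" for z A B C
    using that sets_eq_imp_space_eq[OF sets_\<mu>]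
    by (intro nn_integral_skew_fibre[OF weights \<Phi>]) (simp_all add: space_restrict_space)
qed

theorem lemma5p6:
  fixes \<beta> p s t :: real and \<mu> :: "(real \<times> real) measure"
  assumes "1 < \<beta>" "\<beta> < 3/2"
    and "0 < p" "p < 1" "0 < s" "0 < t" "s + t < 1"
    and "prob_space \<mu>" "sets \<mu> = sets (restrict_space borel (Sb \<beta>))"
  shows "distr (m1 p \<Otimes>\<^sub>M (m2 s t \<Otimes>\<^sub>M \<mu>)) (m1 p \<Otimes>\<^sub>M (m2 s t \<Otimes>\<^sub>M \<mu>)) (Kmap \<beta>)
           = m1 p \<Otimes>\<^sub>M (m2 s t \<Otimes>\<^sub>M nu \<beta> p s t \<mu>)
       \<and> distr (m1 p \<Otimes>\<^sub>M (m2 s t \<Otimes>\<^sub>M \<mu>)) (m1 p \<Otimes>\<^sub>M (m2 s t \<Otimes>\<^sub>M \<mu>)) (Rmap \<beta>)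
           = m1 p \<Otimes>\<^sub>M (m2 s t \<Otimes>\<^sub>M nu \<beta> p s t \<mu>)"
proof -
  have \<beta>: "1 < \<beta>" "\<beta> < 3/2" and sets_\<mu>: "sets \<mu> = sets (restrict_space borel (Sb \<beta>))"
    using assms by simp_all
  have weights: "0 \<le> p" "p \<le> 1" "0 \<le> s" "0 \<le> t" "s + t \<le> 1"
    using assms by simp_all
  note distr_skew_product[OF \<beta> weights \<open>prob_space \<mu>\<close> sets_\<mu>]
  then show ?thesis
    using Kmap_measurable[OF \<beta> sets_\<mu>] Kmap_skew_fibre Rmap_measurable[OF \<beta> sets_\<mu>] Rmap_skew_fibre
    by simp
qed

end
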